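(* Consider the planted $k$-factor model with $p=\lambda/n$, where $\lambda>0$ is a fixed constant. Let $\widehat H$ be the set of all pairs $\{u,v\}$ with $u\ne v$ such that $\deg_G(u)=k$ or $\deg_G(v)=k$. Then, conditioned on any realization of $H^*$ (and for $n$ large enough that $\lambda/n\le 1/2$), $$\mathbb E[\ell(\widehat H,H^* )\mid H^*]\le 1-e^{-2\lambda},\qquad \mathbb P\Big\{\ell(\widehat H,H^* )\le 1-\tfrac12 e^{-2\lambda}\ \Big|\ H^*\Big\}\ge 1-O(1/n).$$
   Context: Planted $k$-factor model: fix an integer $k\ge1$ and $n$ with $kn$ even. A $k$-factor on $[n]$ is a $k$-regular simple graph with vertex set $[n]$, identified with its edge set; $\mathcal H$ is the set of all $k$-factors on $[n]$. Let $p=\lambda/n\in[0,1]$. Draw $H^*$ uniformly at random from $\mathcal H$ and, independently, $G_0\sim\mathcal G(n,p)$ (each of the $\binom n2$ vertex pairs is an edge independently with probability $p$). The observed graph is $G=G_0\cup H^*$. The reconstruction error is $\ell(H^*,\widehat H)=\ell(\widehat H,H^* )=|H^*\triangle\widehat H|/|H^*|$, where $|H^*|=kn/2$. *)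

theory Defs
  imports "HOL-Probability.Probability"
begin

text \<open>Vertex set [n] is rendered as {0..<n}; a graph on [n] is a set of
  2-element vertex sets (its edge set).\<close>

definition vertex_pairs :: "nat \<Rightarrow> nat set set" where
  "vertex_pairs n = {e. \<exists>u v. u < n \<and> v < n \<and> u \<noteq> v \<and> e = {u, v}}"

definition degree :: "nat set set \<Rightarrow> nat \<Rightarrow> nat" where
  "degree G u = card {e \<in> G. u \<in> e}"

definition k_factors :: "nat \<Rightarrow> nat \<Rightarrow> nat set set set" where
  "k_factors n k = {H. H \<subseteq> vertex_pairs n \<and> (\<forall>u<n. degree H u = k)}"

definition gnp :: "nat \<Rightarrow> real \<Rightarrow> nat set set pmf" where
  "gnp n p = map_pmf (\<lambda>f. {e \<in> vertex_pairs n. f e})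
               (Pi_pmf (vertex_pairs n) False (\<lambda>_. bernoulli_pmf p))"

definition loss :: "nat set set \<Rightarrow> nat set set \<Rightarrow> real" where
  "loss Hhat H = real (card (sym_diff H Hhat)) / real (card H)"

definition deg_k_estimator :: "nat \<Rightarrow> nat set set \<Rightarrow> nat set set" where
  "deg_k_estimator k G = {e \<in> G. \<exists>u\<in>e. degree G u = k}"

end

(*
  Call a vertex untouched if the noise graph G0 has no edge at it outside H*; these are exactly
  the vertices of G-degree k. The estimator keeps every edge of H* at an untouched vertex and
  nothing else, and each touched vertex lies on only k edges of H*, so by double counting the
  loss is at most the fraction of touched vertices. A vertex is untouched with probability
  at least (1 - p)^n >= exp (-2 lambda), which gives the bound on the expectation. The untouched
  events of two distinct vertices involve disjoint sets of pairs apart from the pair joining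
  them, so their covariance is at most p; hence the number of untouched vertices has variance
  O(n) and Chebyshev's inequality gives concentration.
*)

theory Submission
  imports Defs
begin

lemma finite_vertex_pairs: "finite (vertex_pairs n)"
proof -
  have "vertex_pairs n \<subseteq> (\<lambda>(u, v). {u, v}) ` ({..<n} \<times> {..<n})"
    unfolding vertex_pairs_def by auto
  then show ?thesis
    by (rule finite_subset) auto
qed

lemma vertex_pairsD: "e \<in> vertex_pairs n \<Longrightarrow> e \<subseteq> {..<n} \<and> card e = 2"
  unfolding vertex_pairs_def by auto

lemma sum_card_incident_eq:
  assumes "finite A" "finite U"
  shows "(\<Sum>u\<in>U. card {e\<in>A. u \<in> e}) = (\<Sum>e\<in>A. card (e \<inter> U))"
proof -
  have "(\<Sum>u\<in>U. card {e\<in>A. u \<in> e}) = (\<Sum>u\<in>U. \<Sum>e\<in>A. of_bool (u \<in> e))"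
    using assms by (simp add: Int_def)
  also have "\<dots> = (\<Sum>e\<in>A. \<Sum>u\<in>U. of_bool (u \<in> e))"
    by (rule sum.swap)
  also have "\<dots> = (\<Sum>e\<in>A. card (e \<inter> U))"
    using assms by (simp add: Int_def conj_commute)
  finally show ?thesis .
qed

lemma k_factors_finite: "H \<in> k_factors n k \<Longrightarrow> finite H"
  unfolding k_factors_def using finite_vertex_pairs finite_subset by blast

lemma k_factors_card_edges:
  assumes "H \<in> k_factors n k"
  shows "2 * card H = k * n"
proof -
  have H: "H \<subseteq> vertex_pairs n" "\<forall>u<n. card {e\<in>H. u \<in> e} = k"
    using assms by (simp_all add: k_factors_def degree_def)
  have "k * n = (\<Sum>u<n. card {e\<in>H. u \<in> e})"
    using H by simp
  also have "\<dots> = (\<Sum>e\<in>H. card (e \<inter> {..<n}))"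
    using k_factors_finite[OF assms] by (simp add: sum_card_incident_eq)
  also have "\<dots> = (\<Sum>e\<in>H. 2)"
    using H vertex_pairsD by (intro sum.cong) (auto simp: Int_absorb2)
  finally show ?thesis by simp
qed

lemma set_pmf_gnp: "set_pmf (gnp n p) \<subseteq> Pow (vertex_pairs n)"
  unfolding gnp_def by auto

lemma finite_set_pmf_gnp: "finite (set_pmf (gnp n p))"
  using set_pmf_gnp finite_vertex_pairs by (meson finite_Pow_iff finite_subset)

lemma prob_gnp_disjoint:
  assumes "0 \<le> p" "p \<le> 1" "S \<subseteq> vertex_pairs n"
  shows "measure_pmf.prob (gnp n p) {G. G \<inter> S = {}} = (1 - p) ^ card S"
proof -
  define V where "V = vertex_pairs n"
  define B where "B = (\<lambda>e. if e \<in> S then {False} else (UNIV :: bool set))"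
  have "(\<lambda>f. {e \<in> V. f e}) -` {G. G \<inter> S = {}} = Pi V B"
    using assms(3) unfolding B_def V_def Pi_def by auto
  then have "measure_pmf.prob (gnp n p) {G. G \<inter> S = {}}
      = measure_pmf.prob (Pi_pmf V False (\<lambda>_. bernoulli_pmf p)) (Pi V B)"
    unfolding gnp_def measure_map_pmf V_def by simp
  also have "\<dots> = (\<Prod>e\<in>V. measure_pmf.prob (bernoulli_pmf p) (B e))"
    by (rule measure_Pi_pmf_Pi) (simp add: V_def finite_vertex_pairs)
  also have "\<dots> = (\<Prod>e\<in>V. if e \<in> S then 1 - p else 1)"
    using assms by (intro prod.cong) (auto simp: B_def measure_pmf_single)
  also have "\<dots> = (1 - p) ^ card S"
    using assms(3) finite_vertex_pairs[of n] unfolding V_def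
    by (simp add: prod.If_cases Int_absorb1)
  finally show ?thesis .
qed

definition non_edges_at :: "nat \<Rightarrow> nat set set \<Rightarrow> nat \<Rightarrow> nat set set" where
  "non_edges_at n H u = {e \<in> vertex_pairs n - H. u \<in> e}"

definition untouched :: "nat \<Rightarrow> nat set set \<Rightarrow> nat set set \<Rightarrow> nat \<Rightarrow> bool" where
  "untouched n H G0 u \<longleftrightarrow> G0 \<inter> non_edges_at n H u = {}"

definition untouched_vertices :: "nat \<Rightarrow> nat set set \<Rightarrow> nat set set \<Rightarrow> nat set" where
  "untouched_vertices n H G0 = {u\<in>{..<n}. untouched n H G0 u}"

lemma non_edges_at_subset: "non_edges_at n H u \<subseteq> vertex_pairs n"
  unfolding non_edges_at_def by auto

lemma card_non_edges_at_le: "card (non_edges_at n H u) \<le> n"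
proof -
  have "non_edges_at n H u \<subseteq> (\<lambda>v. {u, v}) ` {..<n}"
    unfolding non_edges_at_def vertex_pairs_def by auto
  then have "card (non_edges_at n H u) \<le> card ((\<lambda>v. {u, v}) ` {..<n})"
    by (rule card_mono[rotated]) simp
  also have "\<dots> \<le> n"
    using card_image_le[of "{..<n}" "\<lambda>v. {u, v}"] by simp
  finally show ?thesis .
qed

lemma card_non_edges_at_Int_le:
  assumes "u \<noteq> w"
  shows "card (non_edges_at n H u \<inter> non_edges_at n H w) \<le> 1"
proof -
  have "non_edges_at n H u \<inter> non_edges_at n H w \<subseteq> {{u, w}}"
    unfolding non_edges_at_def vertex_pairs_def using assms by auto
  then show ?thesis
    using card_mono[of "{{u, w}}"] by simp
qed

lemma degree_Un_k_factor_iff: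
  assumes "H \<in> k_factors n k" "G0 \<subseteq> vertex_pairs n" "u < n"
  shows "degree (G0 \<union> H) u = k \<longleftrightarrow> untouched n H G0 u"
proof -
  have fin: "finite (G0 \<inter> non_edges_at n H u)"
    using assms(2) finite_vertex_pairs by (meson finite_Int finite_subset)
  have "{e \<in> G0 \<union> H. u \<in> e} = {e\<in>H. u \<in> e} \<union> (G0 \<inter> non_edges_at n H u)"
    using assms(2) unfolding non_edges_at_def by auto
  then have "degree (G0 \<union> H) u = card {e\<in>H. u \<in> e} + card (G0 \<inter> non_edges_at n H u)"
    unfolding degree_def using k_factors_finite[OF assms(1)] fin
    by (simp add: card_Un_disjoint non_edges_at_def disjoint_iff)
  also have "card {e\<in>H. u \<in> e} = k"
    using assms by (simp add: k_factors_def degree_def)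
  finally show ?thesis
    using fin by (simp add: untouched_def)
qed

lemma deg_k_estimator_subset:
  assumes "H \<in> k_factors n k" "G0 \<subseteq> vertex_pairs n"
  shows "deg_k_estimator k (G0 \<union> H) \<subseteq> H"
proof
  fix e
  assume "e \<in> deg_k_estimator k (G0 \<union> H)"
  then obtain u where e: "e \<in> G0 \<union> H" "u \<in> e" "degree (G0 \<union> H) u = k"
    unfolding deg_k_estimator_def by auto
  have "e \<in> vertex_pairs n"
    using e(1) assms by (auto simp: k_factors_def)
  moreover from this have "untouched n H G0 u"
    using e vertex_pairsD degree_Un_k_factor_iff[OF assms] by blast
  ultimately show "e \<in> H"
    using e unfolding untouched_def non_edges_at_def by auto
qed

lemma card_missed_edges_le:
  assumes "H \<in> k_factors n k" "G0 \<subseteq> vertex_pairs n"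
  shows "2 * card (H - deg_k_estimator k (G0 \<union> H)) \<le> k * (n - card (untouched_vertices n H G0))"
proof -
  define M where "M = H - deg_k_estimator k (G0 \<union> H)"
  define D where "D = {..<n} - untouched_vertices n H G0"
  have HV: "H \<subseteq> vertex_pairs n"
    using assms by (simp add: k_factors_def)
  have missed: "e \<subseteq> D" "card e = 2" if "e \<in> M" for e
  proof -
    have "e \<in> vertex_pairs n"
      using that HV unfolding M_def by auto
    moreover have "\<forall>u\<in>e. degree (G0 \<union> H) u \<noteq> k"
      using that unfolding M_def deg_k_estimator_def by auto
    ultimately show "e \<subseteq> D" "card e = 2"
      using vertex_pairsD degree_Un_k_factor_iff[OF assms]
      unfolding D_def untouched_vertices_def by blast+
  qed
  have finM: "finite M"
    using k_factors_finite[OF assms(1)] by (simp add: M_def)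
  have "2 * card M = (\<Sum>e\<in>M. card (e \<inter> D))"
    using missed by (simp add: Int_absorb2)
  also have "\<dots> = (\<Sum>u\<in>D. card {e\<in>M. u \<in> e})"
    using finM by (simp add: sum_card_incident_eq D_def)
  also have "\<dots> \<le> (\<Sum>u\<in>D. card {e\<in>H. u \<in> e})"
    using k_factors_finite[OF assms(1)] by (intro sum_mono card_mono) (auto simp: M_def)
  also have "\<dots> = k * card D"
    using assms(1) by (simp add: D_def k_factors_def degree_def)
  also have "card D = n - card (untouched_vertices n H G0)"
    unfolding D_def by (subst card_Diff_subset) (auto simp: untouched_vertices_def)
  finally show ?thesis
    by (simp add: M_def)
qed

lemma loss_deg_k_estimator_le:
  assumes "H \<in> k_factors n k" "G0 \<subseteq> vertex_pairs n" "k \<ge> 1" "n > 0"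
  shows "loss (deg_k_estimator k (G0 \<union> H)) H
    \<le> 1 - real (card (untouched_vertices n H G0)) / real n"
proof -
  define M where "M = H - deg_k_estimator k (G0 \<union> H)"
  have "card (untouched_vertices n H G0) \<le> n"
    using card_mono[of "{..<n}" "untouched_vertices n H G0"] by (auto simp: untouched_vertices_def)
  then have "2 * real (card M) \<le> real k * (real n - real (card (untouched_vertices n H G0)))"
    using card_missed_edges_le[OF assms(1,2)] unfolding M_def
    by (metis of_nat_diff of_nat_le_iff of_nat_mult of_nat_numeral)
  moreover have "loss (deg_k_estimator k (G0 \<union> H)) H = 2 * real (card M) / (real k * real n)"
  proof -
    have "sym_diff H (deg_k_estimator k (G0 \<union> H)) = M"
      using deg_k_estimator_subset[OF assms(1,2)] unfolding M_def by auto
    moreover have "real (card H) = real k * real n / 2"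
      using k_factors_card_edges[OF assms(1)]
      by (metis of_nat_mult of_nat_numeral nonzero_mult_div_cancel_left zero_neq_numeral)
    ultimately show ?thesis
      unfolding loss_def by (simp only:) simp
  qed
  ultimately have "loss (deg_k_estimator k (G0 \<union> H)) H
      \<le> real k * (real n - real (card (untouched_vertices n H G0))) / (real k * real n)"
    by (metis divide_right_mono of_nat_0_le_iff mult_nonneg_nonneg)
  also have "\<dots> = 1 - real (card (untouched_vertices n H G0)) / real n"
    using assms(3,4) by (simp add: field_simps)
  finally show ?thesis .
qed

lemma expectation_of_bool:
  "measure_pmf.expectation M (\<lambda>x. of_bool (P x)) = measure_pmf.prob M {x. P x}"
proof -
  have "(\<lambda>x. of_bool (P x) :: real) = indicator {x. P x}"
    by (auto simp: indicator_def)
  then show ?thesis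
    by simp
qed

lemma expectation_of_bool_covariance:
  "measure_pmf.expectation M
      (\<lambda>x. (of_bool (P x) - measure_pmf.prob M {x. P x}) * (of_bool (Q x) - measure_pmf.prob M {x. Q x}))
    = measure_pmf.prob M {x. P x \<and> Q x} - measure_pmf.prob M {x. P x} * measure_pmf.prob M {x. Q x}"
proof -
  define a where "a = measure_pmf.prob M {x. P x}"
  define b where "b = measure_pmf.prob M {x. Q x}"
  have int: "integrable M (\<lambda>x. of_bool (R x) :: real)" for R
    by (rule measure_pmf.integrable_const_bound[where B = 1]) auto
  have "(\<lambda>x. (of_bool (P x) - a) * (of_bool (Q x) - b))
      = (\<lambda>x. (of_bool (P x \<and> Q x) - b * of_bool (P x)) - (a * of_bool (Q x) - a * b) :: real)"
    by (auto simp: algebra_simps)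
  then show ?thesis
    using int by (simp add: expectation_of_bool a_def b_def)
qed

lemma variance_sum_pmf:
  fixes f :: "'i \<Rightarrow> 'a \<Rightarrow> real"
  assumes "finite (set_pmf M)" "finite I"
  shows "measure_pmf.variance M (\<lambda>x. \<Sum>i\<in>I. f i x)
    = (\<Sum>i\<in>I. \<Sum>j\<in>I. measure_pmf.expectation M
        (\<lambda>x. (f i x - measure_pmf.expectation M (f i)) * (f j x - measure_pmf.expectation M (f j))))"
proof -
  have int: "integrable M g" for g :: "'a \<Rightarrow> real"
    using assms(1) by (rule integrable_measure_pmf_finite)
  have "(\<Sum>i\<in>I. f i x) - measure_pmf.expectation M (\<lambda>x. \<Sum>i\<in>I. f i x)
      = (\<Sum>i\<in>I. f i x - measure_pmf.expectation M (f i))" for x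
    using int by (simp add: sum_subtractf)
  then show ?thesis
    using int by (simp add: power2_eq_square sum_product)
qed

lemma prob_ge_half_expectation:
  fixes Y :: "'a \<Rightarrow> real"
  assumes "integrable (measure_pmf M) (\<lambda>x. Y x ^ 2)" "0 < m" "m \<le> measure_pmf.expectation M Y"
  shows "measure_pmf.prob M {x. m / 2 \<le> Y x} \<ge> 1 - 4 * measure_pmf.variance M Y / m\<^sup>2"
proof -
  have "{x. \<not> m / 2 \<le> Y x} \<subseteq> {x \<in> space M. m / 2 \<le> \<bar>Y x - measure_pmf.expectation M Y\<bar>}"
    using assms(3) by (auto simp: abs_if)
  then have "measure_pmf.prob M {x. \<not> m / 2 \<le> Y x}
      \<le> measure_pmf.prob M {x \<in> space M. m / 2 \<le> \<bar>Y x - measure_pmf.expectation M Y\<bar>}"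
    by (intro measure_pmf.finite_measure_mono) simp_all
  also have "\<dots> \<le> measure_pmf.variance M Y / (m / 2)\<^sup>2"
    using assms by (intro measure_pmf.Chebyshev_inequality) simp_all
  also have "\<dots> = 4 * measure_pmf.variance M Y / m\<^sup>2"
    by (simp add: power_divide)
  finally show ?thesis
    using measure_pmf.prob_compl[of "{x. \<not> m / 2 \<le> Y x}" M]
    by (simp add: Compl_eq_Diff_UNIV[symmetric] Collect_neg_eq[symmetric])
qed

lemma exp_neg_two_le_one_minus_power:
  fixes p :: real
  assumes "0 \<le> p" "p \<le> 1/2"
  shows "exp (- 2 * p * real c) \<le> (1 - p) ^ c"
proof -
  have "- 2 * p \<le> - p - 2 * p\<^sup>2"
    using mult_left_mono[of "2 * p" 1 p] assms by (simp add: power2_eq_square)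
  also have "\<dots> \<le> ln (1 - p)"
    using assms by (rule ln_one_minus_pos_lower_bound)
  finally have "exp (real c * (- 2 * p)) \<le> exp (real c * ln (1 - p))"
    by (intro exp_mono mult_left_mono) simp_all
  then show ?thesis
    using assms by (simp add: exp_of_nat_mult mult.commute mult.left_commute)
qed

lemma power_diff_power_mult_le:
  fixes x :: real
  assumes "0 \<le> x" "x \<le> 1" "a + b = c + d" "d \<le> 1"
  shows "x ^ c - x ^ a * x ^ b \<le> 1 - x"
proof -
  have xd: "x ^ a * x ^ b = x ^ c * x ^ d"
    using assms(3) by (simp add: power_add[symmetric])
  consider "d = 0" | "d = 1"
    using assms(4) by linarith
  then show ?thesis
  proof cases
    case 1
    then show ?thesis using xd assms by simp
  next
    case 2
    then have "x ^ c - x ^ a * x ^ b = x ^ c * (1 - x)"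
      using xd by (simp add: algebra_simps)
    also have "\<dots> \<le> 1 - x"
      using assms by (intro mult_left_le_one_le) (simp_all add: power_le_one)
    finally show ?thesis .
  qed
qed

lemma prob_untouched_all:
  assumes "0 \<le> p" "p \<le> 1"
  shows "measure_pmf.prob (gnp n p) {G. \<forall>u\<in>U. untouched n H G u}
    = (1 - p) ^ card (\<Union>u\<in>U. non_edges_at n H u)"
proof -
  have "{G. \<forall>u\<in>U. untouched n H G u} = {G. G \<inter> (\<Union>u\<in>U. non_edges_at n H u) = {}}"
    unfolding untouched_def by blast
  then show ?thesis
    using assms non_edges_at_subset by (simp add: prob_gnp_disjoint UN_least)
qed

lemma real_card_untouched_vertices:
  "real (card (untouched_vertices n H G)) = (\<Sum>u<n. of_bool (untouched n H G u))"
  by (simp add: untouched_vertices_def Int_def)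

lemma expectation_card_untouched_vertices:
  assumes "0 \<le> p" "p \<le> 1"
  shows "measure_pmf.expectation (gnp n p) (\<lambda>G. real (card (untouched_vertices n H G)))
    = (\<Sum>u<n. (1 - p) ^ card (non_edges_at n H u))"
proof -
  have "measure_pmf.prob (gnp n p) {G. untouched n H G u} = (1 - p) ^ card (non_edges_at n H u)" for u
    using prob_untouched_all[OF assms, where U = "{u}"] by simp
  moreover have "measure_pmf.expectation (gnp n p) (\<lambda>G. real (card (untouched_vertices n H G)))
      = (\<Sum>u<n. measure_pmf.expectation (gnp n p) (\<lambda>G. of_bool (untouched n H G u)))"
    unfolding real_card_untouched_vertices
    by (rule Bochner_Integration.integral_sum) (simp add: integrable_measure_pmf_finite finite_set_pmf_gnp)
  ultimately show ?thesis
    by (simp add: expectation_of_bool)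
qed

lemma covariance_untouched_le:
  assumes "0 \<le> p" "p \<le> 1"
  shows "measure_pmf.prob (gnp n p) {G. untouched n H G u \<and> untouched n H G w}
      - measure_pmf.prob (gnp n p) {G. untouched n H G u} * measure_pmf.prob (gnp n p) {G. untouched n H G w}
    \<le> of_bool (u = w) + p"
proof (cases "u = w")
  case True
  let ?P = "measure_pmf.prob (gnp n p) {G. untouched n H G w}"
  have "?P \<le> 1" "0 \<le> ?P * ?P"
    by simp_all
  with True assms show ?thesis
    by (simp; linarith)
next
  case False
  define A where "A = non_edges_at n H u"
  define B where "B = non_edges_at n H w"
  have "finite A" "finite B"
    unfolding A_def B_def using non_edges_at_subset finite_vertex_pairs by (metis finite_subset)+
  then have "card A + card B = card (A \<union> B) + card (A \<inter> B)"
    by (rule card_Un_Int)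
  moreover have "card (A \<inter> B) \<le> 1"
    unfolding A_def B_def using False by (rule card_non_edges_at_Int_le)
  ultimately have "(1 - p) ^ card (A \<union> B) - (1 - p) ^ card A * (1 - p) ^ card B \<le> p"
    using power_diff_power_mult_le[of "1 - p"] assms by fastforce
  moreover have "{G. untouched n H G u \<and> untouched n H G w} = {G. \<forall>v\<in>{u, w}. untouched n H G v}"
    by auto
  ultimately show ?thesis
    using prob_untouched_all[OF assms, where U = "{u, w}"] prob_untouched_all[OF assms, where U = "{u}"]
      prob_untouched_all[OF assms, where U = "{w}"] False
    unfolding A_def B_def by simp
qed

lemma variance_card_untouched_vertices_le:
  assumes "0 \<le> p" "p \<le> 1"
  shows "measure_pmf.variance (gnp n p) (\<lambda>G. real (card (untouched_vertices n H G)))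
    \<le> real n * (1 + real n * p)"
proof -
  let ?X = "\<lambda>u G. of_bool (untouched n H G u) :: real"
  have "measure_pmf.variance (gnp n p) (\<lambda>G. real (card (untouched_vertices n H G)))
      = (\<Sum>u<n. \<Sum>w<n. measure_pmf.expectation (gnp n p)
          (\<lambda>G. (?X u G - measure_pmf.expectation (gnp n p) (?X u))
            * (?X w G - measure_pmf.expectation (gnp n p) (?X w))))"
    unfolding real_card_untouched_vertices
    by (rule variance_sum_pmf) (simp_all add: finite_set_pmf_gnp)
  also have "\<dots> \<le> (\<Sum>u<n. \<Sum>w<n. of_bool (u = w) + p)"
    using covariance_untouched_le[OF assms]
    by (intro sum_mono) (simp add: expectation_of_bool expectation_of_bool_covariance)
  also have "\<dots> = real n * (1 + real n * p)"
    by (simp add: sum.distrib algebra_simps)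
  finally show ?thesis .
qed

lemma expectation_card_untouched_vertices_ge:
  assumes "0 \<le> lambda" "lambda / real n \<le> 1/2"
  shows "real n * exp (- 2 * lambda)
    \<le> measure_pmf.expectation (gnp n (lambda / real n)) (\<lambda>G. real (card (untouched_vertices n H G)))"
proof (cases "n = 0")
  case False
  define p where "p = lambda / real n"
  have p: "0 \<le> p" "p \<le> 1/2"
    using assms by (simp_all add: p_def)
  have "exp (- 2 * lambda) \<le> (1 - p) ^ card (non_edges_at n H u)" for u
  proof -
    have "exp (- 2 * lambda) = exp (- 2 * p * real n)"
      using False by (simp add: p_def)
    also have "\<dots> \<le> (1 - p) ^ n"
      using p by (rule exp_neg_two_le_one_minus_power)
    also have "\<dots> \<le> (1 - p) ^ card (non_edges_at n H u)"
      using p card_non_edges_at_le by (intro power_decreasing) simp_all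
    finally show ?thesis .
  qed
  then have "real n * exp (- 2 * lambda) \<le> (\<Sum>u<n. (1 - p) ^ card (non_edges_at n H u))"
    using sum_bounded_below[of "{..<n}" "exp (- 2 * lambda)"] by simp
  also have "\<dots> = measure_pmf.expectation (gnp n p) (\<lambda>G. real (card (untouched_vertices n H G)))"
    using p by (simp add: expectation_card_untouched_vertices)
  finally show ?thesis
    by (simp add: p_def)
qed (simp add: untouched_vertices_def)

lemma expectation_loss_deg_k_estimator_le:
  assumes "H \<in> k_factors n k" "k \<ge> 1" "0 < lambda" "lambda / real n \<le> 1/2"
  shows "measure_pmf.expectation (gnp n (lambda / real n))
    (\<lambda>G0. loss (deg_k_estimator k (G0 \<union> H)) H) \<le> 1 - exp (- 2 * lambda)"
proof (cases "n = 0")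
  case True
  then have "H = {}"
    using assms(1) by (auto simp: k_factors_def vertex_pairs_def)
  then show ?thesis
    using assms(3) by (simp add: loss_def)
next
  case False
  define M where "M = gnp n (lambda / real n)"
  let ?Y = "\<lambda>G. real (card (untouched_vertices n H G))"
  have int: "integrable M f" for f :: "nat set set \<Rightarrow> real"
    unfolding M_def by (simp add: integrable_measure_pmf_finite finite_set_pmf_gnp)
  have "measure_pmf.expectation M (\<lambda>G0. loss (deg_k_estimator k (G0 \<union> H)) H)
      \<le> measure_pmf.expectation M (\<lambda>G. 1 - ?Y G / real n)"
    using set_pmf_gnp assms(1,2) False int unfolding M_def
    by (intro integral_mono_AE AE_pmfI loss_deg_k_estimator_le) auto
  also have "\<dots> = 1 - measure_pmf.expectation M ?Y / real n"
    using int by simp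
  also have "\<dots> \<le> 1 - exp (- 2 * lambda)"
    using expectation_card_untouched_vertices_ge[of lambda n H] assms False
    unfolding M_def by (simp add: field_simps)
  finally show ?thesis
    unfolding M_def .
qed

lemma prob_loss_deg_k_estimator_le:
  assumes "H \<in> k_factors n k" "k \<ge> 1" "n > 0" "0 < lambda" "lambda / real n \<le> 1/2"
  shows "measure_pmf.prob (gnp n (lambda / real n))
      {G0. loss (deg_k_estimator k (G0 \<union> H)) H \<le> 1 - exp (- 2 * lambda) / 2}
    \<ge> 1 - 4 * (1 + lambda) * exp (4 * lambda) / real n"
proof -
  define M where "M = gnp n (lambda / real n)"
  define m where "m = real n * exp (- 2 * lambda)"
  let ?Y = "\<lambda>G. real (card (untouched_vertices n H G))"
  have m: "0 < m"
    using assms(3) by (simp add: m_def)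
  have "exp (- 2 * lambda) * exp (- 2 * lambda) * exp (4 * lambda) = 1"
    by (simp flip: exp_add)
  then have "4 * (1 + lambda) * exp (4 * lambda) / real n = 4 * (real n * (1 + lambda)) / m\<^sup>2"
    using assms(3) unfolding m_def by (simp add: power2_eq_square field_simps)
  then have "1 - 4 * (1 + lambda) * exp (4 * lambda) / real n = 1 - 4 * (real n * (1 + lambda)) / m\<^sup>2"
    by simp
  also have "\<dots> \<le> 1 - 4 * measure_pmf.variance M ?Y / m\<^sup>2"
    using variance_card_untouched_vertices_le[of "lambda / real n" n H] assms
    unfolding M_def by (intro diff_left_mono divide_right_mono) simp_all
  also have "\<dots> \<le> measure_pmf.prob M {G. m / 2 \<le> ?Y G}"
    using expectation_card_untouched_vertices_ge[of lambda n H] assms m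
    unfolding M_def m_def
    by (intro prob_ge_half_expectation) (simp_all add: integrable_measure_pmf_finite finite_set_pmf_gnp)
  also have "\<dots> = measure_pmf.prob M ({G. m / 2 \<le> ?Y G} \<inter> set_pmf M)"
    by (simp add: measure_Int_set_pmf)
  also have "\<dots> \<le> measure_pmf.prob M {G0. loss (deg_k_estimator k (G0 \<union> H)) H \<le> 1 - exp (- 2 * lambda) / 2}"
  proof (intro measure_pmf.finite_measure_mono subsetI)
    fix G
    assume G: "G \<in> {G. m / 2 \<le> ?Y G} \<inter> set_pmf M"
    then have "loss (deg_k_estimator k (G \<union> H)) H \<le> 1 - ?Y G / real n"
      using set_pmf_gnp assms(1-3) unfolding M_def by (intro loss_deg_k_estimator_le) auto
    also have "\<dots> \<le> 1 - exp (- 2 * lambda) / 2"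
      using G assms(3) by (simp add: m_def field_simps)
    finally show "G \<in> {G0. loss (deg_k_estimator k (G0 \<union> H)) H \<le> 1 - exp (- 2 * lambda) / 2}"
      by simp
  qed simp
  finally show ?thesis
    unfolding M_def .
qed

theorem mainTheorem5:
  fixes k :: nat and lambda :: real
  assumes "k \<ge> 1" and "lambda > 0"
  shows "(\<forall>n H. H \<in> k_factors n k \<longrightarrow> lambda / real n \<le> 1/2 \<longrightarrow>
            measure_pmf.expectation (gnp n (lambda / real n))
              (\<lambda>G0. loss (deg_k_estimator k (G0 \<union> H)) H) \<le> 1 - exp (- 2 * lambda))
       \<and> (\<exists>C N. \<forall>n H. n \<ge> N \<longrightarrow> H \<in> k_factors n k \<longrightarrow>
            measure_pmf.prob (gnp n (lambda / real n))
              {G0. loss (deg_k_estimator k (G0 \<union> H)) H \<le> 1 - exp (- 2 * lambda) / 2}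
            \<ge> 1 - C / real n)"
proof (intro conjI allI impI exI)
  fix n H
  assume "H \<in> k_factors n k" "lambda / real n \<le> 1/2"
  with assms show "measure_pmf.expectation (gnp n (lambda / real n))
      (\<lambda>G0. loss (deg_k_estimator k (G0 \<union> H)) H) \<le> 1 - exp (- 2 * lambda)"
    by (intro expectation_loss_deg_k_estimator_le)
next
  fix n H
  assume n: "nat \<lceil>2 * lambda\<rceil> + 1 \<le> n" and H: "H \<in> k_factors n k"
  then have "lambda / real n \<le> 1/2"
    by (simp add: field_simps) linarith
  with n H assms show "measure_pmf.prob (gnp n (lambda / real n))
      {G0. loss (deg_k_estimator k (G0 \<union> H)) H \<le> 1 - exp (- 2 * lambda) / 2}
    \<ge> 1 - 4 * (1 + lambda) * exp (4 * lambda) / real n"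
    by (intro prob_loss_deg_k_estimator_le) auto
qed

end
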